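(* Let $L\subseteq Q$ be an extension of Lie algebras with $L$ semiprime and $Q$ an algebra of quotients of $L$. Then $[Q,Q]$ is an algebra of quotients of $[L,L]$.
   Context: Lie algebras over a commutative unital ring $\Phi$. $[L,L]$ is the span of all brackets of elements of $L$. $\mathrm{Ann}_L(X)=\{a\in L:[a,x]=0\ \forall x\in X\}$. $L$ is semiprime if $[I,I]\ne 0$ for every nonzero ideal $I$. For a Lie subalgebra $L\subseteq Q$, $Q$ is an algebra of quotients of $L$ if for every nonzero $q\in Q$ there is an ideal $I$ of $L$ with $\mathrm{Ann}_L(I)=0$ and $0\ne[I,q]\subseteq L$. *)

theory Defs
  imports Main
begin

text \<open>Lie algebras over a commutative unital ring 'r, represented on a carrier set
 inside an ambient additive group 'a, with scalar multiplication sm and bracket br.\<close>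

definition lie_algebra ::
  "('r::comm_ring_1 \<Rightarrow> 'a::ab_group_add \<Rightarrow> 'a) \<Rightarrow> ('a \<Rightarrow> 'a \<Rightarrow> 'a) \<Rightarrow> 'a set \<Rightarrow> bool" where
  "lie_algebra sm br Q \<longleftrightarrow>
     0 \<in> Q \<and> (\<forall>x\<in>Q. \<forall>y\<in>Q. x + y \<in> Q) \<and> (\<forall>x\<in>Q. - x \<in> Q) \<and>
     (\<forall>r. \<forall>x\<in>Q. sm r x \<in> Q) \<and> (\<forall>x\<in>Q. \<forall>y\<in>Q. br x y \<in> Q) \<and>
     (\<forall>r. \<forall>x\<in>Q. \<forall>y\<in>Q. sm r (x + y) = sm r x + sm r y) \<and>
     (\<forall>r s. \<forall>x\<in>Q. sm (r + s) x = sm r x + sm s x) \<and>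
     (\<forall>r s. \<forall>x\<in>Q. sm (r * s) x = sm r (sm s x)) \<and>
     (\<forall>x\<in>Q. sm 1 x = x) \<and>
     (\<forall>x\<in>Q. \<forall>y\<in>Q. \<forall>z\<in>Q. br (x + y) z = br x z + br y z) \<and>
     (\<forall>x\<in>Q. \<forall>y\<in>Q. \<forall>z\<in>Q. br x (y + z) = br x y + br x z) \<and>
     (\<forall>r. \<forall>x\<in>Q. \<forall>y\<in>Q. br (sm r x) y = sm r (br x y)) \<and>
     (\<forall>r. \<forall>x\<in>Q. \<forall>y\<in>Q. br x (sm r y) = sm r (br x y)) \<and>
     (\<forall>x\<in>Q. br x x = 0) \<and>
     (\<forall>x\<in>Q. \<forall>y\<in>Q. \<forall>z\<in>Q. br x (br y z) + br y (br z x) + br z (br x y) = 0)"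

definition lie_subalgebra ::
  "('r::comm_ring_1 \<Rightarrow> 'a::ab_group_add \<Rightarrow> 'a) \<Rightarrow> ('a \<Rightarrow> 'a \<Rightarrow> 'a) \<Rightarrow> 'a set \<Rightarrow> 'a set \<Rightarrow> bool" where
  "lie_subalgebra sm br L Q \<longleftrightarrow> L \<subseteq> Q \<and> lie_algebra sm br L"

inductive_set span_mod :: "('r \<Rightarrow> 'a::ab_group_add \<Rightarrow> 'a) \<Rightarrow> 'a set \<Rightarrow> 'a set"
  for sm :: "'r \<Rightarrow> 'a \<Rightarrow> 'a" and S :: "'a set" where
  base: "x \<in> S \<Longrightarrow> x \<in> span_mod sm S"
| zero: "0 \<in> span_mod sm S"
| add: "x \<in> span_mod sm S \<Longrightarrow> y \<in> span_mod sm S \<Longrightarrow> x + y \<in> span_mod sm S"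
| smult: "x \<in> span_mod sm S \<Longrightarrow> sm r x \<in> span_mod sm S"

definition brk_span ::
  "('r \<Rightarrow> 'a::ab_group_add \<Rightarrow> 'a) \<Rightarrow> ('a \<Rightarrow> 'a \<Rightarrow> 'a) \<Rightarrow> 'a set \<Rightarrow> 'a set \<Rightarrow> 'a set" where
  "brk_span sm br X Y = span_mod sm {br x y | x y. x \<in> X \<and> y \<in> Y}"

definition lie_ideal ::
  "('r \<Rightarrow> 'a::ab_group_add \<Rightarrow> 'a) \<Rightarrow> ('a \<Rightarrow> 'a \<Rightarrow> 'a) \<Rightarrow> 'a set \<Rightarrow> 'a set \<Rightarrow> bool" where
  "lie_ideal sm br I L \<longleftrightarrow> I \<subseteq> L \<and> 0 \<in> I \<and> (\<forall>x\<in>I. \<forall>y\<in>I. x + y \<in> I) \<and>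
     (\<forall>r. \<forall>x\<in>I. sm r x \<in> I) \<and> (\<forall>x\<in>I. \<forall>a\<in>L. br x a \<in> I \<and> br a x \<in> I)"

definition ann :: "('a \<Rightarrow> 'a \<Rightarrow> 'a::zero) \<Rightarrow> 'a set \<Rightarrow> 'a set \<Rightarrow> 'a set" where
  "ann br L X = {a \<in> L. \<forall>x\<in>X. br a x = 0}"

definition semiprime ::
  "('r \<Rightarrow> 'a::ab_group_add \<Rightarrow> 'a) \<Rightarrow> ('a \<Rightarrow> 'a \<Rightarrow> 'a) \<Rightarrow> 'a set \<Rightarrow> bool" where
  "semiprime sm br L \<longleftrightarrow>
     (\<forall>I. lie_ideal sm br I L \<and> I \<noteq> {0} \<longrightarrow> brk_span sm br I I \<noteq> {0})"

definition algebra_of_quotients ::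
  "('r::comm_ring_1 \<Rightarrow> 'a::ab_group_add \<Rightarrow> 'a) \<Rightarrow> ('a \<Rightarrow> 'a \<Rightarrow> 'a) \<Rightarrow> 'a set \<Rightarrow> 'a set \<Rightarrow> bool" where
  "algebra_of_quotients sm br L Q \<longleftrightarrow>
     lie_algebra sm br Q \<and> lie_subalgebra sm br L Q \<and>
     (\<forall>q\<in>Q. q \<noteq> 0 \<longrightarrow>
        (\<exists>I. lie_ideal sm br I L \<and> ann br L I = {0} \<and>
             {br x q | x. x \<in> I} \<noteq> {0} \<and> {br x q | x. x \<in> I} \<subseteq> L))"

end

theory Submission
  imports Defs
begin

text \<open>
  Let \<open>q \<noteq> 0\<close> lie in \<open>[Q,Q]\<close> and let \<open>I\<close> be an ideal of \<open>L\<close> with \<open>Ann\<^sub>L(I) = 0\<close> and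
  \<open>0 \<noteq> [I,q] \<subseteq> L\<close>. Then \<open>J = [I,I]\<close> serves as the corresponding ideal of \<open>[L,L]\<close>.
  Since \<open>ad q\<close> is a derivation, \<open>[[x,y],q] = [x,[y,q]] + [[x,q],y] \<in> [L,L]\<close>.
  Semiprimeness gives \<open>Ann\<^sub>L(J) = 0\<close>: for \<open>K = Ann\<^sub>L(J)\<close> the ideal \<open>I \<inter> K\<close> satisfies
  \<open>[I \<inter> K, I \<inter> K] \<subseteq> J \<inter> K\<close>, and \<open>J \<inter> K\<close> is abelian, hence zero; so \<open>I \<inter> K = 0\<close>,
  whence \<open>[K,I] = 0\<close> and \<open>K = 0\<close>. Finally, if \<open>[J,q] = 0\<close>, the same derivation identity
  shows that every \<open>[y,q]\<close> with \<open>y \<in> I\<close> annihilates \<open>J\<close>, so \<open>[I,q] = 0\<close>.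
\<close>

lemma span_mod_mono:
  assumes "S \<subseteq> T"
  shows "span_mod sm S \<subseteq> span_mod sm T"
proof
  fix x assume "x \<in> span_mod sm S"
  then show "x \<in> span_mod sm T"
    by (induction rule: span_mod.induct) (use assms in \<open>auto intro: span_mod.intros\<close>)
qed

lemma brk_span_mono:
  "X \<subseteq> X' \<Longrightarrow> Y \<subseteq> Y' \<Longrightarrow> brk_span sm br X Y \<subseteq> brk_span sm br X' Y'"
  unfolding brk_span_def by (rule span_mod_mono) blast

locale lie_alg =
  fixes sm :: "'r::comm_ring_1 \<Rightarrow> 'a::ab_group_add \<Rightarrow> 'a"
    and br :: "'a \<Rightarrow> 'a \<Rightarrow> 'a"
    and L :: "'a set"
  assumes lie_algebra: "lie_algebra sm br L"
begin

lemma
  shows zero_closed: "0 \<in> L"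
    and add_closed: "x \<in> L \<Longrightarrow> y \<in> L \<Longrightarrow> x + y \<in> L"
    and smult_closed: "x \<in> L \<Longrightarrow> sm r x \<in> L"
    and bracket_closed: "x \<in> L \<Longrightarrow> y \<in> L \<Longrightarrow> br x y \<in> L"
    and smult_add_right: "x \<in> L \<Longrightarrow> y \<in> L \<Longrightarrow> sm r (x + y) = sm r x + sm r y"
    and smult_add_left: "x \<in> L \<Longrightarrow> sm (r + s) x = sm r x + sm s x"
    and smult_one: "x \<in> L \<Longrightarrow> sm 1 x = x"
    and bracket_add_left: "x \<in> L \<Longrightarrow> y \<in> L \<Longrightarrow> z \<in> L \<Longrightarrow> br (x + y) z = br x z + br y z"
    and bracket_add_right: "x \<in> L \<Longrightarrow> y \<in> L \<Longrightarrow> z \<in> L \<Longrightarrow> br x (y + z) = br x y + br x z"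
    and bracket_smult_left: "x \<in> L \<Longrightarrow> y \<in> L \<Longrightarrow> br (sm r x) y = sm r (br x y)"
    and bracket_self: "x \<in> L \<Longrightarrow> br x x = 0"
    and jacobi: "x \<in> L \<Longrightarrow> y \<in> L \<Longrightarrow> z \<in> L \<Longrightarrow>
      br x (br y z) + br y (br z x) + br z (br x y) = 0"
  using lie_algebra by (simp_all add: lie_algebra_def)

lemma smult_zero: "sm r 0 = 0"
  using smult_add_right[of 0 0 r] zero_closed by simp

lemma smult_minus_one: "x \<in> L \<Longrightarrow> sm (- 1) x = - x"
  using smult_add_left[of x "- 1" 1] smult_add_left[of x 0 0] smult_one[of x]
  by (simp add: eq_neg_iff_add_eq_0)

lemma bracket_zero_left: "x \<in> L \<Longrightarrow> br 0 x = 0"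
  using bracket_add_left[of 0 0 x] zero_closed by simp

lemma bracket_neg_left: "x \<in> L \<Longrightarrow> y \<in> L \<Longrightarrow> br (- x) y = - br x y"
  using bracket_smult_left[of x y "- 1"] smult_minus_one bracket_closed by simp

lemma bracket_antisym:
  assumes "x \<in> L" "y \<in> L"
  shows "br x y = - br y x"
proof -
  have "0 = br (x + y) (x + y)"
    using assms add_closed bracket_self by simp
  also have "\<dots> = br x x + br x y + (br y x + br y y)"
    using assms add_closed bracket_add_left bracket_add_right by simp
  finally show ?thesis
    using assms bracket_self by (simp add: eq_neg_iff_add_eq_0)
qed

lemma bracket_bracket_left:
  assumes "x \<in> L" "y \<in> L" "z \<in> L"
  shows "br (br x y) z = br x (br y z) + br (br x z) y"
proof -
  have "br z (br x y) = - br (br x y) z"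
    using assms bracket_closed by (intro bracket_antisym)
  moreover have "br y (br z x) = br (br x z) y"
  proof -
    have "br y (br z x) = - br (br z x) y"
      using assms bracket_closed by (intro bracket_antisym)
    also have "\<dots> = - br (- br x z) y"
      using assms bracket_antisym[of z x] by simp
    also have "\<dots> = br (br x z) y"
      using assms bracket_closed bracket_neg_left by simp
    finally show ?thesis .
  qed
  ultimately show ?thesis
    using jacobi[OF assms] by (simp add: algebra_simps)
qed

lemma span_mod_subset:
  assumes "S \<subseteq> L"
  shows "span_mod sm S \<subseteq> L"
proof
  fix x assume "x \<in> span_mod sm S"
  then show "x \<in> L"
    by (induction rule: span_mod.induct) (use assms in \<open>auto intro: zero_closed add_closed smult_closed\<close>)
qed

lemma span_mod_neg: "S \<subseteq> L \<Longrightarrow> x \<in> span_mod sm S \<Longrightarrow> - x \<in> span_mod sm S"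
  using span_mod_subset smult_minus_one span_mod.smult by (metis subsetD)

lemma brk_span_subset: "X \<subseteq> L \<Longrightarrow> Y \<subseteq> L \<Longrightarrow> brk_span sm br X Y \<subseteq> L"
  unfolding brk_span_def by (rule span_mod_subset) (auto intro: bracket_closed)

lemma lie_algebra_subset:
  assumes "B \<subseteq> L" "0 \<in> B" "\<forall>x\<in>B. \<forall>y\<in>B. x + y \<in> B" "\<forall>x\<in>B. - x \<in> B"
    and "\<forall>r. \<forall>x\<in>B. sm r x \<in> B" "\<forall>x\<in>B. \<forall>y\<in>B. br x y \<in> B"
  shows "lie_algebra sm br B"
  using lie_algebra assms unfolding lie_algebra_def by (simp add: subset_iff)

lemma lie_algebra_brk_span: "lie_algebra sm br (brk_span sm br L L)"
proof -
  have sub: "brk_span sm br L L \<subseteq> L"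
    by (rule brk_span_subset) auto
  have "{br x y |x y. x \<in> L \<and> y \<in> L} \<subseteq> L"
    by (auto intro: bracket_closed)
  then have "\<forall>x\<in>brk_span sm br L L. - x \<in> brk_span sm br L L"
    unfolding brk_span_def using span_mod_neg by blast
  moreover have "\<forall>x\<in>brk_span sm br L L. \<forall>y\<in>brk_span sm br L L. br x y \<in> brk_span sm br L L"
    using sub unfolding brk_span_def by (blast intro: span_mod.base)
  ultimately show ?thesis
    using sub unfolding brk_span_def
    by (intro lie_algebra_subset) (auto intro: span_mod.zero span_mod.add span_mod.smult)
qed

lemma bracket_span_mod_left:
  assumes "S \<subseteq> L" "q \<in> L" "\<forall>s\<in>S. br s q \<in> span_mod sm T" "z \<in> span_mod sm S"
  shows "br z q \<in> span_mod sm T"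
  using assms(4)
proof (induction rule: span_mod.induct)
  case (base x)
  then show ?case using assms(3) by blast
next
  case zero
  then show ?case using assms(2) bracket_zero_left span_mod.zero by simp
next
  case (add x y)
  then have "x \<in> L" "y \<in> L" using span_mod_subset assms(1) by auto
  then show ?case using add.IH assms(2) bracket_add_left span_mod.add by simp
next
  case (smult x r)
  then have "x \<in> L" using span_mod_subset assms(1) by auto
  then show ?case using smult.IH assms(2) bracket_smult_left span_mod.smult by simp
qed

lemma bracket_brk_span_left:
  assumes "X \<subseteq> L" "Y \<subseteq> L" "q \<in> L" "X \<subseteq> A" "Y \<subseteq> B"
    and "\<forall>x\<in>X. br x q \<in> A" "\<forall>y\<in>Y. br y q \<in> B"
    and "z \<in> brk_span sm br X Y"
  shows "br z q \<in> brk_span sm br A B"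
  unfolding brk_span_def
proof (rule bracket_span_mod_left[OF _ assms(3)])
  show "{br x y |x y. x \<in> X \<and> y \<in> Y} \<subseteq> L"
    using assms(1,2) by (auto intro: bracket_closed)
  show "z \<in> span_mod sm {br x y |x y. x \<in> X \<and> y \<in> Y}"
    using assms(8) by (simp add: brk_span_def)
  show "\<forall>s\<in>{br x y |x y. x \<in> X \<and> y \<in> Y}. br s q \<in> span_mod sm {br a b |a b. a \<in> A \<and> b \<in> B}"
  proof clarify
    fix x y assume "x \<in> X" "y \<in> Y"
    then have "br x (br y q) \<in> span_mod sm {br a b |a b. a \<in> A \<and> b \<in> B}"
      "br (br x q) y \<in> span_mod sm {br a b |a b. a \<in> A \<and> b \<in> B}"
      using assms(4-7) by (blast intro: span_mod.base)+
    moreover have "br (br x y) q = br x (br y q) + br (br x q) y"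
      using \<open>x \<in> X\<close> \<open>y \<in> Y\<close> assms(1-3) bracket_bracket_left by blast
    ultimately show "br (br x y) q \<in> span_mod sm {br a b |a b. a \<in> A \<and> b \<in> B}"
      by (simp add: span_mod.add)
  qed
qed

lemma lie_ideal_Int: "lie_ideal sm br I L \<Longrightarrow> lie_ideal sm br J L \<Longrightarrow> lie_ideal sm br (I \<inter> J) L"
  unfolding lie_ideal_def by auto

lemma lie_ideal_brk_span:
  assumes I: "lie_ideal sm br I L" and J: "lie_ideal sm br J L"
  shows "lie_ideal sm br (brk_span sm br I J) L"
proof -
  have IJ: "I \<subseteq> L" "J \<subseteq> L"
    using I J by (simp_all add: lie_ideal_def)
  have gen: "{br x y |x y. x \<in> I \<and> y \<in> J} \<subseteq> L"
    using IJ by (auto intro: bracket_closed)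
  have right: "br z a \<in> brk_span sm br I J" if "z \<in> brk_span sm br I J" "a \<in> L" for z a
    using IJ that I J by (intro bracket_brk_span_left) (auto simp: lie_ideal_def)
  have "br a z \<in> brk_span sm br I J" if "z \<in> brk_span sm br I J" "a \<in> L" for z a
  proof -
    have "z \<in> L" using that brk_span_subset IJ by blast
    then have "br a z = - br z a" using bracket_antisym that(2) by blast
    then show ?thesis
      using right[OF that] span_mod_neg[OF gen] unfolding brk_span_def by simp
  qed
  with right show ?thesis
    using brk_span_subset[OF IJ] unfolding lie_ideal_def brk_span_def
    by (simp add: span_mod.zero span_mod.add span_mod.smult)
qed

lemma lie_ideal_ann:
  assumes J: "lie_ideal sm br J L"
  shows "lie_ideal sm br (ann br L J) L"
proof -
  have JL: "J \<subseteq> L" using J by (simp add: lie_ideal_def)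
  have right: "br (br k a) x = 0" if "k \<in> ann br L J" "a \<in> L" "x \<in> J" for k a x
  proof -
    have "k \<in> L" "br k x = 0" "br k (br a x) = 0"
      using that J by (auto simp: ann_def lie_ideal_def)
    then show ?thesis
      using bracket_bracket_left[of k a x] that JL bracket_zero_left by auto
  qed
  have left: "br (br a k) x = 0" if "k \<in> ann br L J" "a \<in> L" "x \<in> J" for k a x
  proof -
    have "k \<in> L" using that by (simp add: ann_def)
    then have "br (br a k) x = - br (br k a) x"
      using that JL bracket_antisym bracket_neg_left bracket_closed by (metis subsetD)
    then show ?thesis using right[OF that] by simp
  qed
  have "0 \<in> ann br L J"
    using JL zero_closed bracket_zero_left by (auto simp: ann_def)
  moreover have "k + k' \<in> ann br L J" if "k \<in> ann br L J" "k' \<in> ann br L J" for k k'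
    using that JL add_closed bracket_add_left by (auto simp: ann_def)
  moreover have "sm r k \<in> ann br L J" if "k \<in> ann br L J" for k r
    using that JL smult_closed bracket_smult_left smult_zero by (auto simp: ann_def)
  moreover have "br k a \<in> ann br L J" "br a k \<in> ann br L J" if "k \<in> ann br L J" "a \<in> L" for k a
    using that right left bracket_closed by (auto simp: ann_def)
  moreover have "ann br L J \<subseteq> L"
    by (auto simp: ann_def)
  ultimately show ?thesis
    unfolding lie_ideal_def by blast
qed

lemma semiprime_abelian_ideal_eq_zero:
  assumes "semiprime sm br L" "lie_ideal sm br N L" "\<forall>x\<in>N. \<forall>y\<in>N. br x y = 0"
  shows "N = {0}"
proof -
  have "x = 0" if "x \<in> brk_span sm br N N" for x
    using that unfolding brk_span_def
    by (induction rule: span_mod.induct) (use assms(3) smult_zero in auto)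
  then have "brk_span sm br N N = {0}"
    unfolding brk_span_def using span_mod.zero by blast
  then show ?thesis
    using assms(1,2) unfolding semiprime_def by blast
qed

lemma semiprime_ann_brk_span_eq_zero:
  assumes sp: "semiprime sm br L" and I: "lie_ideal sm br I L" and "ann br L I = {0}"
  shows "ann br L (brk_span sm br I I) = {0}"
proof -
  define J where "J = brk_span sm br I I"
  define K where "K = ann br L J"
  have J: "lie_ideal sm br J L" unfolding J_def by (rule lie_ideal_brk_span[OF I I])
  have K: "lie_ideal sm br K L" unfolding K_def using J by (rule lie_ideal_ann)
  have IL: "I \<subseteq> L" using I by (simp add: lie_ideal_def)
  have JK: "J \<inter> K = {0}"
    using sp lie_ideal_Int[OF J K] by (rule semiprime_abelian_ideal_eq_zero) (auto simp: K_def ann_def)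
  have IK: "I \<inter> K = {0}"
  proof (rule semiprime_abelian_ideal_eq_zero[OF sp lie_ideal_Int[OF I K]], clarify)
    fix x y assume "x \<in> I" "y \<in> I" "x \<in> K" "y \<in> K"
    have "br x y \<in> J"
      using \<open>x \<in> I\<close> \<open>y \<in> I\<close> unfolding J_def brk_span_def by (blast intro: span_mod.base)
    moreover have "br x y \<in> K"
      using K \<open>x \<in> K\<close> \<open>y \<in> I\<close> IL unfolding lie_ideal_def by blast
    ultimately show "br x y = 0" using JK by blast
  qed
  have "k = 0" if "k \<in> K" for k
  proof -
    have "k \<in> L" using \<open>k \<in> K\<close> by (simp add: K_def ann_def)
    then have "br k x \<in> I \<inter> K" if "x \<in> I" for x
      using I K \<open>k \<in> K\<close> that IL unfolding lie_ideal_def by blast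
    with IK have "br k x = 0" if "x \<in> I" for x
      using that by blast
    then have "k \<in> ann br L I"
      using \<open>k \<in> L\<close> by (simp add: ann_def)
    then show ?thesis using assms(3) by blast
  qed
  moreover have "0 \<in> K" using K by (simp add: lie_ideal_def)
  ultimately show ?thesis unfolding K_def J_def by blast
qed

lemma ann_eq_zero_subset:
  assumes "ann br L X = {0}" "X \<subseteq> L" "L' \<subseteq> L" "0 \<in> L'"
  shows "ann br L' X = {0}"
  using assms bracket_zero_left unfolding ann_def by auto

end

definition denominator_ideal ::
  "('r::comm_ring_1 \<Rightarrow> 'a::ab_group_add \<Rightarrow> 'a) \<Rightarrow> ('a \<Rightarrow> 'a \<Rightarrow> 'a) \<Rightarrow> 'a set \<Rightarrow> 'a \<Rightarrow> 'a set \<Rightarrow> bool" where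
  "denominator_ideal sm br L q I \<longleftrightarrow>
     lie_ideal sm br I L \<and> ann br L I = {0} \<and>
     {br x q | x. x \<in> I} \<noteq> {0} \<and> {br x q | x. x \<in> I} \<subseteq> L"

lemma algebra_of_quotients_iff:
  "algebra_of_quotients sm br L Q \<longleftrightarrow>
     lie_algebra sm br Q \<and> lie_subalgebra sm br L Q \<and>
     (\<forall>q\<in>Q. q \<noteq> 0 \<longrightarrow> (\<exists>I. denominator_ideal sm br L q I))"
  by (simp add: algebra_of_quotients_def denominator_ideal_def)

locale lie_extension = L: lie_alg sm br L + Q: lie_alg sm br Q for sm br L Q +
  assumes L_subset_Q: "L \<subseteq> Q"
begin

lemma bracket_eq_zero_if_killed_by_essential_ideal:
  assumes J: "lie_ideal sm br J L" "ann br L J = {0}"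
    and q: "q \<in> Q" "\<forall>z\<in>J. br z q = 0"
    and y: "y \<in> L" "br y q \<in> L"
  shows "br y q = 0"
proof -
  have "br (br y q) x = 0" if "x \<in> J" for x
  proof -
    have x: "x \<in> L" using that J(1) by (auto simp: lie_ideal_def)
    have "br x y \<in> J" using that y(1) J(1) by (simp add: lie_ideal_def)
    then have "br x (br y q) + br (br x q) y = 0"
      using Q.bracket_bracket_left[of x y q] x y(1) q L_subset_Q by auto
    then have "br x (br y q) = 0"
      using q(2) that Q.bracket_zero_left y(1) L_subset_Q by auto
    then show ?thesis using L.bracket_antisym[OF y(2) x] by simp
  qed
  then have "br y q \<in> ann br L J" using y(2) by (simp add: ann_def)
  then show ?thesis using J(2) by blast
qed

lemma denominator_ideal_brk_span:
  assumes sp: "semiprime sm br L" and q: "q \<in> Q" and I: "denominator_ideal sm br L q I"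
  shows "denominator_ideal sm br (brk_span sm br L L) q (brk_span sm br I I)"
proof -
  let ?J = "brk_span sm br I I"
  have I_ideal: "lie_ideal sm br I L" and ann_I: "ann br L I = {0}"
    and I_nz: "{br x q | x. x \<in> I} \<noteq> {0}" and Iq: "\<forall>x\<in>I. br x q \<in> L"
    using I unfolding denominator_ideal_def by blast+
  have IL: "I \<subseteq> L" using I_ideal by (simp add: lie_ideal_def)
  have J: "lie_ideal sm br ?J L" by (rule L.lie_ideal_brk_span[OF I_ideal I_ideal])
  have ann_J: "ann br L ?J = {0}" by (rule L.semiprime_ann_brk_span_eq_zero[OF sp I_ideal ann_I])
  have J_LL: "?J \<subseteq> brk_span sm br L L" by (rule brk_span_mono[OF IL IL])
  have LL: "brk_span sm br L L \<subseteq> L" by (rule L.brk_span_subset) auto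
  have "lie_ideal sm br ?J (brk_span sm br L L)"
    using J J_LL LL unfolding lie_ideal_def by blast
  moreover have "ann br (brk_span sm br L L) ?J = {0}"
    using J_LL LL
    by (intro L.ann_eq_zero_subset[OF ann_J]) (auto simp: brk_span_def intro: span_mod.zero)
  moreover have "{br z q | z. z \<in> ?J} \<subseteq> brk_span sm br L L"
    using IL L_subset_Q q Iq Q.bracket_brk_span_left[of I I q L L] by blast
  moreover have "{br z q | z. z \<in> ?J} \<noteq> {0}"
  proof
    assume "{br z q | z. z \<in> ?J} = {0}"
    then have "\<forall>z\<in>?J. br z q = 0" by blast
    then have "br y q = 0" if "y \<in> I" for y
      using bracket_eq_zero_if_killed_by_essential_ideal[OF J ann_J q] that IL Iq by blast
    moreover have "0 \<in> I" using I_ideal by (simp add: lie_ideal_def)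
    ultimately have "{br x q | x. x \<in> I} = {0}" by fastforce
    with I_nz show False ..
  qed
  ultimately show ?thesis unfolding denominator_ideal_def by blast
qed

end

theorem mainTheorem6:
  fixes sm :: "'r::comm_ring_1 \<Rightarrow> 'a::ab_group_add \<Rightarrow> 'a"
    and br :: "'a \<Rightarrow> 'a \<Rightarrow> 'a"
    and L Q :: "'a set"
  assumes "lie_algebra sm br Q"
    and "lie_subalgebra sm br L Q"
    and "semiprime sm br L"
    and "algebra_of_quotients sm br L Q"
  shows "algebra_of_quotients sm br (brk_span sm br L L) (brk_span sm br Q Q)"
proof -
  interpret lie_extension sm br L Q
    by unfold_locales (use assms(1,2) in \<open>auto simp: lie_subalgebra_def\<close>)
  have "\<exists>I. denominator_ideal sm br (brk_span sm br L L) q I"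
    if q: "q \<in> brk_span sm br Q Q" "q \<noteq> 0" for q
  proof -
    have "q \<in> Q" using q(1) Q.brk_span_subset by blast
    then obtain I where "denominator_ideal sm br L q I"
      using assms(4) q(2) unfolding algebra_of_quotients_iff by blast
    then show ?thesis
      using denominator_ideal_brk_span[OF assms(3) \<open>q \<in> Q\<close>] by blast
  qed
  moreover have "brk_span sm br L L \<subseteq> brk_span sm br Q Q"
    by (rule brk_span_mono[OF L_subset_Q L_subset_Q])
  ultimately show ?thesis
    unfolding algebra_of_quotients_iff lie_subalgebra_def
    using Q.lie_algebra_brk_span L.lie_algebra_brk_span by blast
qed

end
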